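(* Let $k,t\ge2$ be coprime integers and suppose that $mk \leq t < (m+1)k$ for some integer $m \geq 2$. Let $1\le r\le t-k$ and let $1\le\bar r\le t$ be the representative of $rk^{-1}\pmod t$. If $\bar{r} \geq m + 1$, then \[ k\,\psi_{k/t}\left(\frac{r}{t}\right)> \psi_{1/t}\left(\frac{\bar{r}}{t}\right), \] where $\psi_c(y) \coloneqq \psi(y+c)-\psi(y)$ for $c,y>0$.
   Context: $\psi=\Gamma'/\Gamma$ is the digamma function. *)

theory Defs
  imports "HOL-Analysis.Analysis"
begin

definition psi_shift :: "real \<Rightarrow> real \<Rightarrow> real" where
  "psi_shift c y = Digamma (y + c) - Digamma y"

end

theory Submission
  imports Defs
begin

text \<open>
  From the series \<open>\<psi>\<^sub>c(y) = \<Sum>\<^sub>n c / ((y + n)(y + n + c))\<close> one gets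
  \<open>K \<psi>\<^sub>K\<^sub>c(x) > \<psi>\<^sub>c(y)\<close> termwise whenever \<open>K \<ge> 1\<close> and \<open>x < K y\<close>.
  With \<open>c = 1/t\<close>, \<open>x = r/t\<close>, \<open>y = rbar/t\<close> this condition reads \<open>r < k rbar\<close>,
  which holds because \<open>r \<le> t - k < m k < k rbar\<close>.
\<close>

lemma sums_strict_mono:
  fixes f g :: "nat \<Rightarrow> real"
  assumes "f sums a" "g sums b" "\<And>n. f n < g n"
  shows "a < b"
proof -
  have "(\<lambda>n. g n - f n) sums (b - a)"
    using assms by (intro sums_diff)
  moreover have "0 < (\<Sum>n. g n - f n)"
    using assms calculation by (intro suminf_pos) (auto dest: sums_summable)
  ultimately show ?thesis
    by (simp add: sums_iff)
qed

lemma psi_shift_sums: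
  fixes c y :: real
  assumes "c > 0" "y > 0"
  shows "(\<lambda>n. 1 / (y + real n) - 1 / (y + c + real n)) sums psi_shift c y"
proof -
  have "(\<lambda>n. inverse (real (Suc n)) - inverse (y + real n)) sums (Digamma y + euler_mascheroni)"
    using summable_Digamma[of y] assms by (simp add: Digamma_def summable_sums)
  moreover have "(\<lambda>n. inverse (real (Suc n)) - inverse (y + c + real n))
      sums (Digamma (y + c) + euler_mascheroni)"
    using summable_Digamma[of "y + c"] assms by (simp add: Digamma_def summable_sums)
  ultimately show ?thesis
    using sums_diff by (fastforce simp: psi_shift_def divide_inverse algebra_simps)
qed

lemma inverse_diff_less_scaled:
  fixes a b c K :: real
  assumes "a > 0" "b > 0" "c > 0" "K \<ge> 1" "a < K * b"
  shows "1 / b - 1 / (b + c) < K * (1 / a - 1 / (a + K * c))"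
proof -
  have "a + K * c > 0"
    using assms by (simp add: add_pos_pos)
  have "a * (a + K * c) < (K * b) * (K * b + K * c)"
    using assms by (intro mult_strict_mono add_strict_right_mono) auto
  then have denom_less: "a * (a + K * c) < K * K * (b * (b + c))"
    by (simp add: algebra_simps)
  have "1 / b - 1 / (b + c) = c / (b * (b + c))"
    using assms by (simp add: field_simps)
  also have "\<dots> = K * K * c / (K * K * (b * (b + c)))"
    using assms by simp
  also have "\<dots> < K * K * c / (a * (a + K * c))"
    using assms denom_less by (intro divide_strict_left_mono mult_pos_pos add_pos_pos) auto
  also have "\<dots> = K * (1 / a - 1 / (a + K * c))"
    using assms \<open>a + K * c > 0\<close> by (simp add: field_simps)
  finally show ?thesis .
qed

lemma psi_shift_less_scaled:
  fixes c x y K :: real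
  assumes "c > 0" "x > 0" "y > 0" "K \<ge> 1" "x < K * y"
  shows "psi_shift c y < K * psi_shift (K * c) x"
proof (rule sums_strict_mono)
  show "(\<lambda>n. 1 / (y + real n) - 1 / (y + c + real n)) sums psi_shift c y"
    using assms by (intro psi_shift_sums)
  show "(\<lambda>n. K * (1 / (x + real n) - 1 / (x + K * c + real n))) sums (K * psi_shift (K * c) x)"
    using assms by (intro sums_mult psi_shift_sums) auto
  fix n
  have "x + real n < K * (y + real n)"
    using assms mult_right_mono[of 1 K "real n"] by (simp add: algebra_simps)
  then show "1 / (y + real n) - 1 / (y + c + real n)
      < K * (1 / (x + real n) - 1 / (x + K * c + real n))"
    using assms inverse_diff_less_scaled[of "x + real n" "y + real n" c K]
    by (simp add: add_ac)
qed

theorem lemma5p5: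
  fixes k t m r rbar :: nat
  assumes "k \<ge> 2" and "t \<ge> 2" and "coprime k t"
    and "m \<ge> 2" and "m * k \<le> t" and "t < (m + 1) * k"
    and "1 \<le> r" and "r \<le> t - k"
    and "1 \<le> rbar" and "rbar \<le> t" and "(rbar * k) mod t = r mod t"
    and "rbar \<ge> m + 1"
  shows "real k * psi_shift (real k / real t) (real r / real t)
           > psi_shift (1 / real t) (real rbar / real t)"
proof -
  have "(m + 1) * k \<le> rbar * k"
    using assms(12) by (rule mult_right_mono) simp
  then have "r < k * rbar"
    using assms by (simp add: mult.commute)
  then have "real r / real t < real k * (real rbar / real t)"
    using assms by (simp add: divide_strict_right_mono flip: of_nat_mult)
  then have "psi_shift (1 / real t) (real rbar / real t)
      < real k * psi_shift (real k * (1 / real t)) (real r / real t)"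
    using assms by (intro psi_shift_less_scaled) auto
  then show ?thesis
    by simp
qed

end
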